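(* Let $p>5$ be a prime. Then $$\sum_{k=1}^{(p-1)/2}\frac{\binom{2k}{k}}{k(-16)^k}\equiv-\frac{15}{2}\cdot\frac{F_{p-\left(\frac{p}{5}\right)}}{p}+4q_p(2)\pmod p.$$
   Context: $(F_n)_{n\ge0}$ is the Fibonacci sequence ($F_0=0$, $F_1=1$, $F_{n+1}=F_n+F_{n-1}$); $\left(\frac{p}{5}\right)$ is the Legendre symbol (so $p\mid F_{p-(p/5)}$); $q_p(2)=(2^{p-1}-1)/p$. Congruences between rationals with denominators prime to $p$ mean the difference divided by $p$ has denominator prime to $p$. *)

theory Defs
  imports "HOL-Number_Theory.Number_Theory"
begin

definition rat_cong_mod :: "rat \<Rightarrow> rat \<Rightarrow> int \<Rightarrow> bool" where
  "rat_cong_mod x y m \<longleftrightarrow> coprime (snd (quotient_of ((x - y) / of_int m))) m"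

definition fermat_quot2 :: "nat \<Rightarrow> rat" where
  "fermat_quot2 p = (2 ^ (p - 1) - 1) / of_nat p"

end

theory Submission
  imports Defs
begin

text \<open>
  Write \<open>p = 2n + 1\<close>. Modulo \<open>p\<close> one has \<open>C(2k,k) \<equiv> (-4)^k C(n,k)\<close>, so the sum is congruent to
  \<open>\<Sum>\<^sub>k C(n,k) / (k 4^k) = \<Sum>\<^sub>j ((5/4)^j - 1) / j\<close>. Since \<open>1/j \<equiv> -2 C(p,2j) / p (mod p)\<close>, this is
  congruent to \<open>-(2/p) \<Sum>\<^sub>j C(p,2j) ((5/4)^j - 1) = -(2/p) (L(3p) / 2^(p+1) - 2^(p-1))\<close>, where \<open>L\<close>
  denotes the Lucas numbers. The theorem thus becomes a congruence modulo \<open>p\<^sup>2\<close> between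
  \<open>L(3p) = L(p)^3 + 3 L(p)\<close>, \<open>F(p - (p/5)) = (L(p) - (p/5) F(p)) / 2\<close> and \<open>2^(p-1)\<close>, which follows
  from \<open>L(p) \<equiv> 1\<close>, \<open>F(p) \<equiv> (p/5)\<close>, \<open>2^(p-1) \<equiv> 1 (mod p)\<close> and the norm equation
  \<open>L(p)\<^sup>2 - 5 F(p)\<^sup>2 = -4\<close>.
\<close>

section \<open>Rationals whose denominator is prime to a modulus\<close>

definition coprime_denom :: "int \<Rightarrow> rat \<Rightarrow> bool" where
  "coprime_denom m x \<longleftrightarrow> coprime (snd (quotient_of x)) m"

lemma rat_cong_mod_iff_coprime_denom:
  "rat_cong_mod x y m \<longleftrightarrow> coprime_denom m ((x - y) / of_int m)"
  unfolding rat_cong_mod_def coprime_denom_def ..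

lemma coprime_denom_iff:
  "coprime_denom m x \<longleftrightarrow> (\<exists>a b. b \<noteq> 0 \<and> coprime b m \<and> x = of_int a / of_int b)"
proof
  assume "coprime_denom m x"
  then show "\<exists>a b. b \<noteq> 0 \<and> coprime b m \<and> x = of_int a / of_int b"
    unfolding coprime_denom_def
    by (metis prod.collapse quotient_of_denom_pos quotient_of_div less_irrefl)
next
  assume "\<exists>a b. b \<noteq> 0 \<and> coprime b m \<and> x = of_int a / of_int b"
  then obtain a b where ab: "b \<noteq> 0" "coprime b m" "x = of_int a / of_int b" by blast
  obtain c d where cd: "quotient_of x = (c, d)" by fastforce
  have "d > 0" "coprime c d" using cd quotient_of_denom_pos quotient_of_coprime by auto
  moreover have "of_int c / of_int d = (of_int a / of_int b :: rat)"
    using cd ab quotient_of_div by metis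
  ultimately have "c * b = a * d" using ab(1) by (simp add: field_simps) (metis of_int_eq_iff of_int_mult)
  then have "d dvd b"
    using \<open>coprime c d\<close> by (metis coprime_commute coprime_dvd_mult_right_iff dvd_triv_right)
  then have "coprime d m" using ab(2) by (rule coprime_divisors[OF _ dvd_refl])
  then show "coprime_denom m x" unfolding coprime_denom_def cd by simp
qed

lemma coprime_denom_of_int: "coprime_denom m (of_int a)"
  unfolding coprime_denom_iff by (rule exI[of _ a], rule exI[of _ 1]) simp

lemma coprime_denom_add:
  assumes "coprime_denom m x" "coprime_denom m y"
  shows "coprime_denom m (x + y)"
proof -
  obtain a b c d where "b \<noteq> 0" "coprime b m" "x = of_int a / of_int b"
    "d \<noteq> 0" "coprime d m" "y = of_int c / of_int d"
    using assms unfolding coprime_denom_iff by blast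
  then have "b * d \<noteq> 0 \<and> coprime (b * d) m \<and> x + y = of_int (a * d + c * b) / of_int (b * d)"
    by (simp add: field_simps)
  then show ?thesis unfolding coprime_denom_iff by blast
qed

lemma coprime_denom_mult:
  assumes "coprime_denom m x" "coprime_denom m y"
  shows "coprime_denom m (x * y)"
proof -
  obtain a b c d where "b \<noteq> 0" "coprime b m" "x = of_int a / of_int b"
    "d \<noteq> 0" "coprime d m" "y = of_int c / of_int d"
    using assms unfolding coprime_denom_iff by blast
  then have "b * d \<noteq> 0 \<and> coprime (b * d) m \<and> x * y = of_int (a * c) / of_int (b * d)"
    by simp
  then show ?thesis unfolding coprime_denom_iff by blast
qed

lemma coprime_denom_divide:
  assumes "coprime_denom m x" "coprime d m"
  shows "coprime_denom m (x / of_int d)"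
proof (cases "d = 0")
  case True
  then show ?thesis using coprime_denom_of_int[of m 0] by simp
next
  case False
  then have "coprime_denom m (1 / of_int d)"
    unfolding coprime_denom_iff using assms(2) by (intro exI[of _ 1] exI[of _ d]) simp
  then show ?thesis using coprime_denom_mult[OF assms(1)] by (simp add: divide_inverse)
qed

lemma coprime_denom_sum:
  "(\<And>i. i \<in> A \<Longrightarrow> coprime_denom m (f i)) \<Longrightarrow> coprime_denom m (\<Sum>i\<in>A. f i)"
  by (induction A rule: infinite_finite_induct)
    (simp_all add: coprime_denom_add coprime_denom_of_int[of m 0, simplified])

lemma rat_cong_modI:
  assumes "x - y = of_int (m * k) / of_int d" "coprime d m"
  shows "rat_cong_mod x y m"
proof (cases "m = 0")
  case True
  then show ?thesis using assms coprime_denom_of_int[of m 0]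
    unfolding rat_cong_mod_iff_coprime_denom by simp
next
  case False
  then have "(x - y) / of_int m = of_int k / of_int d" using assms(1) by simp
  then show ?thesis unfolding rat_cong_mod_iff_coprime_denom
    using coprime_denom_divide[OF coprime_denom_of_int assms(2)] by simp
qed

lemma rat_cong_mod_trans [trans]:
  "rat_cong_mod x y m \<Longrightarrow> rat_cong_mod y z m \<Longrightarrow> rat_cong_mod x z m"
  unfolding rat_cong_mod_iff_coprime_denom
  by (drule (1) coprime_denom_add) (simp add: diff_divide_distrib)

lemma rat_cong_mod_mult_left:
  "coprime_denom m c \<Longrightarrow> rat_cong_mod x y m \<Longrightarrow> rat_cong_mod (c * x) (c * y) m"
  unfolding rat_cong_mod_iff_coprime_denom
  by (drule (1) coprime_denom_mult) (simp add: right_diff_distrib)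

lemma rat_cong_mod_sum:
  "(\<And>i. i \<in> A \<Longrightarrow> rat_cong_mod (f i) (g i) m) \<Longrightarrow> rat_cong_mod (\<Sum>i\<in>A. f i) (\<Sum>i\<in>A. g i) m"
  unfolding rat_cong_mod_iff_coprime_denom
  by (drule coprime_denom_sum) (simp add: sum_subtractf[symmetric] sum_divide_distrib[symmetric])

section \<open>Binomial coefficients\<close>

lemma coprime_of_less_prime:
  assumes "prime p" "0 < k" "k < p"
  shows "coprime (int k) (int p)"
proof -
  have "\<not> p dvd k" using assms(2,3) by (auto dest: dvd_imp_le)
  then have "coprime k p" using assms(1) by (metis prime_imp_coprime coprime_commute)
  then show ?thesis by simp
qed

lemma central_binomial_Suc:
  "Suc k * (2 * Suc k choose Suc k) = 2 * (2 * k + 1) * (2 * k choose k)"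
proof -
  have "Suc k * (2 * Suc k choose Suc k) = 2 * (Suc k * (Suc (2 * k) choose Suc k))"
    using Suc_times_binomial[of k "Suc (2 * k)"] binomial_symmetric[of k "Suc (2 * k)"] by simp
  also have "Suc k * (Suc (2 * k) choose Suc k) = (2 * k + 1) * (2 * k choose k)"
    using Suc_times_binomial_eq[of "2 * k" k] by simp
  finally show ?thesis by simp
qed

lemma Suc_times_binomial_int:
  assumes "Suc k \<le> n"
  shows "int (Suc k) * int (n choose Suc k) = (int n - int k) * int (n choose k)"
proof -
  have "Suc k * (n choose Suc k) = (n - k) * (n choose k)"
    using binomial_absorption[of k n] binomial_absorb_comp[of n k] by simp
  then have "int (Suc k * (n choose Suc k)) = int ((n - k) * (n choose k))"
    by (rule arg_cong)
  then show ?thesis using assms by (simp only: of_nat_mult of_nat_diff)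
qed

text \<open>Both sides satisfy the recursion \<open>(k+1) x(k+1) = 2(2k+1) x(k)\<close> modulo \<open>p\<close>,
  since \<open>2(2k+1) \<equiv> -4(n-k)\<close>.\<close>
lemma central_binomial_cong:
  assumes "prime p" "p = 2 * n + 1" "k \<le> n"
  shows "[int (2 * k choose k) = (-4) ^ k * int (n choose k)] (mod int p)"
  using assms(3)
proof (induction k)
  case (Suc k)
  have "int (Suc k) * int (2 * Suc k choose Suc k) = int (2 * (2 * k + 1) * (2 * k choose k))"
    by (metis central_binomial_Suc of_nat_mult)
  also have "\<dots> = 2 * (2 * int k + 1) * int (2 * k choose k)" by (simp add: algebra_simps)
  also have "[\<dots> = -4 * (int n - int k) * ((-4) ^ k * int (n choose k))] (mod int p)"
  proof (rule cong_mult)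
    have "2 * (2 * int k + 1) - (-4 * (int n - int k)) = 2 * int p"
      using assms(2) by simp
    then show "[2 * (2 * int k + 1) = -4 * (int n - int k)] (mod int p)"
      unfolding cong_iff_dvd_diff by simp
    show "[int (2 * k choose k) = (-4) ^ k * int (n choose k)] (mod int p)"
      using Suc by simp
  qed
  also have "-4 * (int n - int k) * ((-4) ^ k * int (n choose k))
      = int (Suc k) * ((-4) ^ Suc k * int (n choose Suc k))"
  proof -
    have "-4 * (int n - int k) * ((-4) ^ k * int (n choose k))
        = (-4) ^ Suc k * ((int n - int k) * int (n choose k))"
      by (simp add: algebra_simps)
    also have "\<dots> = (-4) ^ Suc k * (int (Suc k) * int (n choose Suc k))"
      using Suc.prems by (simp only: Suc_times_binomial_int)
    also have "\<dots> = int (Suc k) * ((-4) ^ Suc k * int (n choose Suc k))"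
      by (simp only: mult.left_commute)
    finally show ?thesis .
  qed
  finally have "[int (Suc k) * int (2 * Suc k choose Suc k)
      = int (Suc k) * ((-4) ^ Suc k * int (n choose Suc k))] (mod int p)" .
  moreover have "coprime (int (Suc k)) (int p)"
    using coprime_of_less_prime[OF assms(1), of "Suc k"] Suc.prems assms(2) by simp
  ultimately show ?case using cong_mult_lcancel by blast
qed simp

lemma binomial_pred_prime_cong:
  assumes "prime p" "k < p"
  shows "[int (p - 1 choose k) = (-1) ^ k] (mod int p)"
  using assms(2)
proof (induction k)
  case (Suc k)
  have "int p dvd int (p choose Suc k)"
    using dvd_choose_prime[of "Suc k" p] Suc.prems assms(1) by simp
  moreover have "p choose Suc k = (p - 1 choose k) + (p - 1 choose Suc k)"
    using binomial_Suc_Suc[of "p - 1" k] prime_gt_0_nat[OF assms(1)] by simp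
  ultimately have "[int (p - 1 choose k) + int (p - 1 choose Suc k) = 0] (mod int p)"
    by (simp add: cong_0_iff)
  moreover have "[int (p - 1 choose k) = (-1) ^ k] (mod int p)"
    using Suc by simp
  ultimately have "[(-1) ^ k + int (p - 1 choose Suc k) = 0] (mod int p)"
    by (metis cong_add_rcancel cong_sym cong_trans)
  then show ?case by (simp add: cong_iff_dvd_diff add.commute)
qed simp

lemma binomial_prime_over_prime_cong:
  assumes "prime p" "0 < k" "k < p"
  shows "rat_cong_mod (1 / of_nat k) ((-1) ^ (k - 1) * of_nat (p choose k) / of_nat p) (int p)"
proof -
  define s :: rat where "s = (-1) ^ (k - 1)"
  have "s * s = 1" unfolding s_def by (cases "even (k - 1)") simp_all
  have "int p dvd int (p - 1 choose (k - 1)) - (-1) ^ (k - 1)"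
    using binomial_pred_prime_cong[OF assms(1), of "k - 1"] assms(3) by (simp add: cong_iff_dvd_diff)
  then obtain m where "int (p - 1 choose (k - 1)) - (-1) ^ (k - 1) = int p * m" ..
  then have "of_int (int (p - 1 choose (k - 1)) - (-1) ^ (k - 1)) = (of_int (int p * m) :: rat)"
    by (rule arg_cong)
  then have m: "of_nat (p - 1 choose (k - 1)) = s + of_nat p * (of_int m :: rat)"
    unfolding s_def by (simp add: algebra_simps)
  have "of_nat (p choose k) * of_nat k = (of_nat (p - 1 choose (k - 1)) * of_nat p :: rat)"
    using arg_cong[OF times_binomial_minus1_eq[OF assms(2)], of "of_nat :: nat \<Rightarrow> rat"]
    by (simp only: of_nat_mult mult.commute)
  then have "of_nat (p choose k) / of_nat p = (of_nat (p - 1 choose (k - 1)) / of_nat k :: rat)"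
    using assms(2) prime_gt_0_nat[OF assms(1)] by (simp add: frac_eq_eq)
  then have "s * of_nat (p choose k) / of_nat p = s * (s + of_nat p * of_int m) / (of_nat k :: rat)"
    unfolding m by (metis times_divide_eq_right)
  then have "1 / of_nat k - s * of_nat (p choose k) / of_nat p = (1 - s * (s + of_nat p * of_int m)) / (of_nat k :: rat)"
    by (simp add: diff_divide_distrib)
  also have "\<dots> = of_int (int p * (- ((-1) ^ (k - 1) * m))) / of_int (int k)"
    using \<open>s * s = 1\<close> by (simp add: s_def algebra_simps)
  finally show ?thesis
    unfolding s_def[symmetric] using coprime_of_less_prime[OF assms] by (rule rat_cong_modI)
qed

lemma sum_binomial_over_index:
  fixes x :: "'a::field_char_0"
  shows "(\<Sum>k=1..n. of_nat (n choose k) * x ^ k / of_nat k) = (\<Sum>j=1..n. ((1 + x) ^ j - 1) / of_nat j)"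
proof (induction n)
  case (Suc n)
  have "of_nat (Suc n choose k) * x ^ k / of_nat k
      = of_nat (n choose k) * x ^ k / of_nat k + of_nat (Suc n choose k) * x ^ k / (of_nat (Suc n) :: 'a)"
    if k: "k \<in> {1..Suc n}" for k
  proof -
    obtain i where k: "k = Suc i" using k by (cases k) auto
    have "of_nat (n choose i) * of_nat (Suc n) = of_nat (Suc n choose Suc i) * (of_nat (Suc i) :: 'a)"
      by (metis Suc_times_binomial of_nat_mult mult.commute)
    then have absorb: "of_nat (n choose i) / of_nat (Suc i) = (of_nat (Suc n choose Suc i) / of_nat (Suc n) :: 'a)"
      by (simp add: frac_eq_eq del: binomial_Suc_Suc of_nat_Suc)
    have "of_nat (Suc n choose Suc i) / (of_nat (Suc i) :: 'a)
        = of_nat (n choose i) / of_nat (Suc i) + of_nat (n choose Suc i) / of_nat (Suc i)"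
      by (simp add: add_divide_distrib del: of_nat_Suc)
    then have coeff: "of_nat (Suc n choose k) / of_nat k
        = of_nat (n choose k) / of_nat k + of_nat (Suc n choose k) / (of_nat (Suc n) :: 'a)"
      unfolding k absorb by simp
    have "of_nat (Suc n choose k) * x ^ k / of_nat k = (of_nat (Suc n choose k) / of_nat k) * x ^ k"
      by simp
    also have "\<dots> = (of_nat (n choose k) / of_nat k + of_nat (Suc n choose k) / of_nat (Suc n)) * x ^ k"
      by (simp only: coeff)
    finally show ?thesis by (simp add: distrib_right)
  qed
  then have "(\<Sum>k=1..Suc n. of_nat (Suc n choose k) * x ^ k / of_nat k)
      = (\<Sum>k=1..Suc n. of_nat (n choose k) * x ^ k / of_nat k + of_nat (Suc n choose k) * x ^ k / of_nat (Suc n))"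
    by (rule sum.cong[OF refl])
  also have "\<dots> = (\<Sum>k=1..Suc n. of_nat (n choose k) * x ^ k / of_nat k)
        + (\<Sum>k=1..Suc n. of_nat (Suc n choose k) * x ^ k) / of_nat (Suc n)"
    by (simp only: sum.distrib sum_divide_distrib)
  also have "(\<Sum>k=1..Suc n. of_nat (Suc n choose k) * x ^ k) = (1 + x) ^ Suc n - 1"
    using binomial_ring[of x 1 "Suc n"] by (simp add: atMost_atLeast0 sum.atLeast_Suc_atMost add.commute)
  finally show ?case using Suc by simp
qed simp

lemma sum_lessThan_double:
  fixes f :: "nat \<Rightarrow> 'a::comm_monoid_add"
  shows "(\<Sum>i<2 * m. f i) = (\<Sum>j<m. f (2 * j) + f (2 * j + 1))"
  by (induction m) (simp_all add: algebra_simps)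

lemma binomial_even_odd_split:
  fixes a b :: "'a::comm_ring_1" and n :: nat
  defines "ev \<equiv> \<Sum>j\<le>n div 2. of_nat (n choose (2 * j)) * b ^ (2 * j) * a ^ (n - 2 * j)"
    and "od \<equiv> \<Sum>j\<le>n div 2. of_nat (n choose (2 * j + 1)) * b ^ (2 * j + 1) * a ^ (n - (2 * j + 1))"
  shows "(a + b) ^ n = ev + od" and "(a - b) ^ n = ev - od"
proof -
  have split: "(a + c) ^ n = (\<Sum>j\<le>n div 2. of_nat (n choose (2 * j)) * c ^ (2 * j) * a ^ (n - 2 * j))
      + (\<Sum>j\<le>n div 2. of_nat (n choose (2 * j + 1)) * c ^ (2 * j + 1) * a ^ (n - (2 * j + 1)))" for c
  proof -
    have "(a + c) ^ n = (\<Sum>k\<le>n. of_nat (n choose k) * c ^ k * a ^ (n - k))"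
      unfolding add.commute[of a c] by (rule binomial_ring)
    also have "\<dots> = (\<Sum>k<2 * Suc (n div 2). of_nat (n choose k) * c ^ k * a ^ (n - k))"
    proof (rule sum.mono_neutral_left)
      show "{..n} \<subseteq> {..<2 * Suc (n div 2)}" by auto
      show "\<forall>k\<in>{..<2 * Suc (n div 2)} - {..n}. of_nat (n choose k) * c ^ k * a ^ (n - k) = 0"
        by (simp add: binomial_eq_0)
    qed simp
    finally show ?thesis
      by (simp only: sum_lessThan_double sum.distrib lessThan_Suc_atMost)
  qed
  show "(a + b) ^ n = ev + od" unfolding ev_def od_def by (rule split)
  show "(a - b) ^ n = ev - od"
    using split[of "- b"] unfolding ev_def od_def
    by (simp add: power_mult sum_negf)
qed

lemma binomial_sum_sqrt:
  fixes a x :: real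
  assumes "0 \<le> x"
  shows "2 * (\<Sum>j\<le>n div 2. of_nat (n choose (2 * j)) * x ^ j * a ^ (n - 2 * j))
      = (a + sqrt x) ^ n + (a - sqrt x) ^ n"
    and "2 * sqrt x * (\<Sum>j\<le>n div 2. of_nat (n choose (2 * j + 1)) * x ^ j * a ^ (n - (2 * j + 1)))
      = (a + sqrt x) ^ n - (a - sqrt x) ^ n"
proof -
  define ev where "ev = (\<Sum>j\<le>n div 2. of_nat (n choose (2 * j)) * x ^ j * a ^ (n - 2 * j))"
  define od where "od = (\<Sum>j\<le>n div 2. of_nat (n choose (2 * j + 1)) * x ^ j * a ^ (n - (2 * j + 1)))"
  have sq: "sqrt x ^ (2 * j) = x ^ j" for j
    using assms by (simp add: power_mult)
  have even_term: "of_nat (n choose (2 * j)) * sqrt x ^ (2 * j) * a ^ (n - 2 * j)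
      = of_nat (n choose (2 * j)) * x ^ j * a ^ (n - 2 * j)" for j
    by (simp only: sq)
  have odd_term: "of_nat (n choose (2 * j + 1)) * sqrt x ^ (2 * j + 1) * a ^ (n - (2 * j + 1))
      = sqrt x * (of_nat (n choose (2 * j + 1)) * x ^ j * a ^ (n - (2 * j + 1)))" for j
    by (simp only: power_add power_one_right sq) (simp only: mult_ac)
  have "(a + sqrt x) ^ n = ev + sqrt x * od" "(a - sqrt x) ^ n = ev - sqrt x * od"
    using binomial_even_odd_split[of a "sqrt x" n]
    by (simp_all only: even_term odd_term ev_def od_def sum_distrib_left)
  then show "2 * ev = (a + sqrt x) ^ n + (a - sqrt x) ^ n"
    and "2 * sqrt x * od = (a + sqrt x) ^ n - (a - sqrt x) ^ n"
    by simp_all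
qed

lemma sum_binomial_even: "0 < n \<Longrightarrow> 2 * (\<Sum>j\<le>n div 2. n choose (2 * j)) = 2 ^ n"
proof -
  assume "0 < n"
  then have "real (2 * (\<Sum>j\<le>n div 2. n choose (2 * j))) = real (2 ^ n)"
    using binomial_sum_sqrt(1)[of 1 n 1] by simp
  then show ?thesis by (simp only: of_nat_eq_iff)
qed

section \<open>Lucas numbers\<close>

fun lucas :: "nat \<Rightarrow> nat" where
  "lucas 0 = 2"
| "lucas (Suc 0) = 1"
| "lucas (Suc (Suc n)) = lucas (Suc n) + lucas n"

lemma lucas_closed_form:
  fixes \<phi> \<psi> :: real
  defines "\<phi> \<equiv> (1 + sqrt 5) / 2" and "\<psi> \<equiv> (1 - sqrt 5) / 2"
  shows "of_nat (lucas n) = \<phi> ^ n + \<psi> ^ n"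
proof (induction n rule: lucas.induct)
  case (3 n)
  have "\<phi> + 1 = \<phi>\<^sup>2" "\<psi> + 1 = \<psi>\<^sup>2"
    by (simp_all add: \<phi>_def \<psi>_def field_simps power2_eq_square)
  then have "\<phi> ^ n * (\<phi> + 1) + \<psi> ^ n * (\<psi> + 1) = \<phi> ^ Suc (Suc n) + \<psi> ^ Suc (Suc n)"
    by (simp add: power2_eq_square)
  then show ?case using 3 by (simp add: algebra_simps)
qed (simp_all add: \<phi>_def \<psi>_def add_divide_distrib[symmetric])

lemma lucas_Suc_eq_fib: "lucas (Suc n) = fib n + fib (Suc (Suc n))"
  by (induction n rule: fib.induct) simp_all

lemma two_fib_eq_lucas_minus_fib:
  assumes "e \<in> {1, -1}" "0 < m"
  shows "2 * int (fib (nat (int m - e))) = int (lucas m) - e * int (fib m)"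
proof -
  obtain k where m: "m = Suc k" using assms(2) by (cases m) auto
  from assms(1) consider "e = 1" | "e = -1" by blast
  then show ?thesis
  proof cases
    case 1
    then have "nat (int m - e) = k" by (simp add: m)
    then show ?thesis by (simp add: 1 m lucas_Suc_eq_fib)
  next
    case 2
    then have "nat (int m - e) = Suc (Suc k)" by (simp add: m)
    then show ?thesis by (simp add: 2 m lucas_Suc_eq_fib)
  qed
qed

lemma lucas_sq_minus_fib_sq: "int (lucas n) ^ 2 - 5 * int (fib n) ^ 2 = 4 * (-1) ^ n"
proof -
  define \<phi> :: real where "\<phi> = (1 + sqrt 5) / 2"
  define \<psi> :: real where "\<psi> = (1 - sqrt 5) / 2"
  have "\<phi> * \<psi> = -1" by (simp add: \<phi>_def \<psi>_def field_simps)
  have "real_of_int (int (lucas n) ^ 2 - 5 * int (fib n) ^ 2) = (\<phi>^n + \<psi>^n)\<^sup>2 - (\<phi>^n - \<psi>^n)\<^sup>2"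
    by (simp add: lucas_closed_form fib_closed_form \<phi>_def \<psi>_def power_divide)
  also have "\<dots> = 4 * (\<phi> * \<psi>) ^ n" by (simp add: power2_eq_square algebra_simps power_mult_distrib)
  also have "\<dots> = real_of_int (4 * (-1) ^ n)" unfolding \<open>\<phi> * \<psi> = -1\<close> by simp
  finally show ?thesis by (simp only: of_int_eq_iff)
qed

lemma lucas_triple: "int (lucas (3 * n)) = int (lucas n) ^ 3 - 3 * (-1) ^ n * int (lucas n)"
proof -
  define \<phi> :: real where "\<phi> = (1 + sqrt 5) / 2"
  define \<psi> :: real where "\<psi> = (1 - sqrt 5) / 2"
  have closed: "real (lucas m) = \<phi> ^ m + \<psi> ^ m" for m
    unfolding \<phi>_def \<psi>_def by (rule lucas_closed_form)
  have "\<phi> ^ n * \<psi> ^ n = (-1) ^ n"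
    by (simp add: \<phi>_def \<psi>_def field_simps flip: power_mult_distrib)
  have "real (lucas (3 * n)) = (\<phi> ^ n) ^ 3 + (\<psi> ^ n) ^ 3"
    by (simp add: closed flip: power_mult) (simp add: mult.commute)
  also have "\<dots> = (\<phi> ^ n + \<psi> ^ n) ^ 3 - 3 * (\<phi> ^ n * \<psi> ^ n) * (\<phi> ^ n + \<psi> ^ n)"
    by (simp add: power3_eq_cube algebra_simps)
  also have "\<dots> = real_of_int (int (lucas n) ^ 3 - 3 * (-1) ^ n * int (lucas n))"
    unfolding \<open>\<phi> ^ n * \<psi> ^ n = (-1) ^ n\<close> by (simp add: closed)
  finally show ?thesis by (simp only: of_int_eq_iff of_int_of_nat_eq)
qed

lemma sum_binomial_five:
  shows "2 * (\<Sum>j\<le>n div 2. (n choose (2 * j)) * 5 ^ j) = 2 ^ n * lucas n"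
    and "2 * (\<Sum>j\<le>n div 2. (n choose (2 * j + 1)) * 5 ^ j) = 2 ^ n * fib n"
proof -
  define \<phi> :: real where "\<phi> = (1 + sqrt 5) / 2"
  define \<psi> :: real where "\<psi> = (1 - sqrt 5) / 2"
  have "(1 + sqrt 5) ^ n = 2 ^ n * \<phi> ^ n" "(1 - sqrt 5) ^ n = 2 ^ n * \<psi> ^ n"
    by (simp_all add: \<phi>_def \<psi>_def power_divide)
  then have even: "2 * (\<Sum>j\<le>n div 2. real (n choose (2 * j)) * 5 ^ j) = 2 ^ n * (\<phi> ^ n + \<psi> ^ n)"
    and odd: "2 * sqrt 5 * (\<Sum>j\<le>n div 2. real (n choose (2 * j + 1)) * 5 ^ j) = 2 ^ n * (\<phi> ^ n - \<psi> ^ n)"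
    using binomial_sum_sqrt[of 5 n 1] by (simp_all add: right_diff_distrib distrib_left)
  have "real (2 * (\<Sum>j\<le>n div 2. (n choose (2 * j)) * 5 ^ j)) = real (2 ^ n * lucas n)"
    using even by (simp add: lucas_closed_form \<phi>_def \<psi>_def)
  then show "2 * (\<Sum>j\<le>n div 2. (n choose (2 * j)) * 5 ^ j) = 2 ^ n * lucas n"
    by (simp only: of_nat_eq_iff)
  have "real (2 * (\<Sum>j\<le>n div 2. (n choose (2 * j + 1)) * 5 ^ j)) = real (2 ^ n * fib n)"
    using odd by (simp add: fib_closed_form \<phi>_def \<psi>_def field_simps)
  then show "2 * (\<Sum>j\<le>n div 2. (n choose (2 * j + 1)) * 5 ^ j) = 2 ^ n * fib n"
    by (simp only: of_nat_eq_iff)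
qed

lemma sum_binomial_five_quarters:
  "(\<Sum>j\<le>n div 2. of_nat (n choose (2 * j)) * (5 / 4) ^ j) = (of_nat (lucas (3 * n)) / 2 ^ (n + 1) :: rat)"
proof -
  define \<phi> :: real where "\<phi> = (1 + sqrt 5) / 2"
  define \<psi> :: real where "\<psi> = (1 - sqrt 5) / 2"
  have closed: "real (lucas m) = \<phi> ^ m + \<psi> ^ m" for m
    unfolding \<phi>_def \<psi>_def by (rule lucas_closed_form)
  have cube: "1 + sqrt (5 / 4) = \<phi> ^ 3 / 2" "1 - sqrt (5 / 4) = \<psi> ^ 3 / 2"
    by (simp_all add: \<phi>_def \<psi>_def real_sqrt_divide power3_eq_cube field_simps)
  have "2 * (\<Sum>j\<le>n div 2. real (n choose (2 * j)) * (5 / 4) ^ j) = real (lucas (3 * n)) / 2 ^ n"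
    using binomial_sum_sqrt(1)[of "5 / 4" n 1, unfolded cube]
    by (simp add: closed power_divide power_mult add_divide_distrib)
  then have "(\<Sum>j\<le>n div 2. real (n choose (2 * j)) * (5 / 4) ^ j) = real (lucas (3 * n)) / 2 ^ (n + 1)"
    by (simp add: field_simps)
  then have "(of_rat (\<Sum>j\<le>n div 2. of_nat (n choose (2 * j)) * (5 / 4) ^ j) :: real)
      = of_rat (of_nat (lucas (3 * n)) / 2 ^ (n + 1))"
    by (simp add: of_rat_sum of_rat_mult of_rat_power of_rat_divide)
  then show ?thesis by (simp only: of_rat_eq_iff)
qed

section \<open>Lucas and Fibonacci numbers modulo a prime\<close>

lemma sum_binomial_prime_even_cong:
  assumes "prime p" "odd p"
  shows "[(\<Sum>j\<le>p div 2. (p choose (2 * j)) * x ^ j) = 1] (mod p)"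
proof -
  have "{..p div 2} = insert 0 {1..p div 2}" by auto
  then have "(\<Sum>j\<le>p div 2. (p choose (2 * j)) * x ^ j) = 1 + (\<Sum>j=1..p div 2. (p choose (2 * j)) * x ^ j)"
    by simp
  moreover have "p dvd (\<Sum>j=1..p div 2. (p choose (2 * j)) * x ^ j)"
    using assms by (intro dvd_sum dvd_mult2 dvd_choose_prime) (auto elim!: oddE)
  then have "[1 + (\<Sum>j=1..p div 2. (p choose (2 * j)) * x ^ j) = 1 + 0] (mod p)"
    by (intro cong_add cong_refl) (simp add: cong_0_iff)
  ultimately show ?thesis by simp
qed

lemma sum_binomial_prime_odd_cong:
  assumes "prime p" "odd p"
  shows "[(\<Sum>j\<le>p div 2. (p choose (2 * j + 1)) * x ^ j) = x ^ (p div 2)] (mod p)"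
proof -
  have "(\<Sum>j\<le>p div 2. (p choose (2 * j + 1)) * x ^ j)
      = x ^ (p div 2) + (\<Sum>j<p div 2. (p choose (2 * j + 1)) * x ^ j)"
    using assms(2) by (simp add: lessThan_Suc_atMost[symmetric] del: lessThan_Suc_atMost)
  moreover have "p dvd (\<Sum>j<p div 2. (p choose (2 * j + 1)) * x ^ j)"
    using assms by (intro dvd_sum dvd_mult2 dvd_choose_prime) (auto elim!: oddE)
  then have "[x ^ (p div 2) + (\<Sum>j<p div 2. (p choose (2 * j + 1)) * x ^ j) = x ^ (p div 2) + 0] (mod p)"
    by (intro cong_add cong_refl) (simp add: cong_0_iff)
  ultimately show ?thesis by simp
qed

lemma two_power_pred_prime_cong:
  assumes "prime p" "p \<noteq> 2"
  shows "[2 ^ (p - 1) = 1] (mod p)"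
proof (rule fermat_theorem[OF assms(1)])
  show "\<not> p dvd 2" using primes_dvd_imp_eq[OF assms(1) two_is_prime_nat] assms(2) by auto
qed

lemma two_power_prime_cong:
  assumes "prime p" "p \<noteq> 2"
  shows "[2 ^ p = 2] (mod p)"
proof -
  have "[2 * 2 ^ (p - 1) = 2 * 1] (mod p)"
    using two_power_pred_prime_cong[OF assms] by (rule cong_scalar_left)
  then show ?thesis using prime_gt_0_nat[OF assms(1)] by (simp flip: power_Suc)
qed

lemma lucas_prime_cong:
  assumes "prime p"
  shows "[lucas p = 1] (mod p)"
proof (cases "p = 2")
  case True
  have "lucas 2 = 3" by (simp add: eval_nat_numeral)
  then show ?thesis by (simp add: True cong_def)
next
  case False
  then have "2 < p" using prime_ge_2_nat[OF assms] by simp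
  then have "odd p" using assms prime_odd_nat by blast
  have "[2 * (\<Sum>j\<le>p div 2. (p choose (2 * j)) * 5 ^ j) = 2 * 1] (mod p)"
    using sum_binomial_prime_even_cong[OF assms \<open>odd p\<close>] by (rule cong_scalar_left)
  moreover have "[2 ^ p * lucas p = 2 * lucas p] (mod p)"
    using two_power_prime_cong[OF assms False] by (rule cong_scalar_right)
  ultimately have "[2 * lucas p = 2 * 1] (mod p)"
    unfolding sum_binomial_five(1) by (metis cong_sym cong_trans)
  then show ?thesis using \<open>odd p\<close> cong_mult_lcancel_nat[of 2 p "lucas p" 1] by simp
qed

lemma Legendre_five_reciprocity:
  assumes "prime p" "2 < p" "p \<noteq> 5"
  shows "Legendre (int p) 5 = Legendre 5 (int p)" and "Legendre (int p) 5 \<in> {1, -1}"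
proof -
  have "Legendre (int p) (int 5) * Legendre (int 5) (int p) = (-1) ^ ((p - 1) div 2 * ((5 - 1) div 2))"
    using assms by (intro Quadratic_Reciprocity) auto
  then have "Legendre (int p) 5 * Legendre 5 (int p) = 1"
    by simp
  then show "Legendre (int p) 5 = Legendre 5 (int p)" and "Legendre (int p) 5 \<in> {1, -1}"
    by (auto simp: zmult_eq_1_iff)
qed

lemma fib_prime_cong:
  assumes "prime p" "2 < p" "p \<noteq> 5"
  shows "[int (fib p) = Legendre (int p) 5] (mod int p)"
proof -
  have "odd p" using assms prime_odd_nat by auto
  have "[2 * (\<Sum>j\<le>p div 2. (p choose (2 * j + 1)) * 5 ^ j) = 2 * 5 ^ (p div 2)] (mod p)"
    using sum_binomial_prime_odd_cong[OF assms(1) \<open>odd p\<close>] by (rule cong_scalar_left)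
  moreover have "[2 ^ p * fib p = 2 * fib p] (mod p)"
    using two_power_prime_cong[OF assms(1)] assms(2) by (intro cong_scalar_right) auto
  ultimately have "[2 * fib p = 2 * 5 ^ (p div 2)] (mod p)"
    unfolding sum_binomial_five(2) by (metis cong_sym cong_trans)
  then have "[fib p = 5 ^ (p div 2)] (mod p)" using \<open>odd p\<close> by (simp add: cong_mult_lcancel_nat)
  then have "[int (fib p) = 5 ^ ((p - 1) div 2)] (mod int p)"
    using \<open>odd p\<close> by (auto simp: cong_int_iff[symmetric] elim!: oddE)
  moreover have "[Legendre 5 (int p) = 5 ^ ((p - 1) div 2)] (mod int p)"
    using assms by (intro euler_criterion) auto
  ultimately show ?thesis
    unfolding Legendre_five_reciprocity(1)[OF assms] by (metis cong_sym cong_trans)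
qed

text \<open>Writing \<open>a = 1 + \<alpha>\<close>, \<open>c = 1 + \<gamma>\<close>, the norm equation gives
  \<open>2(\<alpha> - 5\<gamma>) = 5\<gamma>\<^sup>2 - \<alpha>\<^sup>2\<close>.\<close>
lemma norm_equation_cong_square:
  fixes q a c :: int
  assumes "odd q" "[a = 1] (mod q)" "[c = 1] (mod q)" "a\<^sup>2 - 5 * c\<^sup>2 = -4"
  shows "q\<^sup>2 dvd (a - 1) - 5 * (c - 1)"
proof -
  have "q dvd a - 1" "q dvd c - 1" using assms(2,3) by (simp_all add: cong_iff_dvd_diff)
  then have "q\<^sup>2 dvd (a - 1)\<^sup>2" "q\<^sup>2 dvd (c - 1)\<^sup>2" by (simp_all add: dvd_power_same)
  then have "q\<^sup>2 dvd 5 * (c - 1)\<^sup>2 - (a - 1)\<^sup>2" by (simp add: dvd_diff dvd_mult)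
  also have "5 * (c - 1)\<^sup>2 - (a - 1)\<^sup>2 = 2 * ((a - 1) - 5 * (c - 1))"
    using assms(4) by (simp add: power2_eq_square algebra_simps)
  finally have "q\<^sup>2 dvd 2 * ((a - 1) - 5 * (c - 1))" .
  moreover have "coprime (q\<^sup>2) 2" using assms(1) by simp
  ultimately show ?thesis by (metis coprime_dvd_mult_right_iff)
qed

text \<open>With \<open>\<alpha> = a - 1\<close>, \<open>\<beta> = e b - 1\<close>, \<open>\<tau> = w - 1\<close>, twice the expression is \<open>3(\<alpha> - 5\<beta>)\<close>
  plus terms quadratic in \<open>\<alpha>, \<beta>, \<tau>\<close>; the previous lemma puts \<open>\<alpha> - 5\<beta>\<close> into \<open>q\<^sup>2\<close>.\<close>
lemma norm_equation_cubic_dvd: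
  fixes q a b e w F :: int
  assumes "odd q" "[a = 1] (mod q)" "[e * b = 1] (mod q)" "e\<^sup>2 = 1" "[w = 1] (mod q)"
    and "a\<^sup>2 - 5 * b\<^sup>2 = -4" "2 * F = a - e * b"
  shows "q\<^sup>2 dvd - (a ^ 3 + 3 * a) - 4 * w\<^sup>2 + 15 * w * F + 8 * w"
proof -
  define \<alpha> \<beta> \<tau> where "\<alpha> = a - 1" "\<beta> = e * b - 1" "\<tau> = w - 1"
  have "q dvd \<alpha>" "q dvd \<beta>" "q dvd \<tau>"
    using assms(2,3,5) by (simp_all add: \<alpha>_\<beta>_\<tau>_def cong_iff_dvd_diff)
  have "q\<^sup>2 dvd \<alpha> - 5 * \<beta>"
    using norm_equation_cong_square[OF assms(1,2,3)] assms(4,6)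
    by (simp add: \<alpha>_\<beta>_\<tau>_def power_mult_distrib)
  then have t1: "q\<^sup>2 dvd 3 * (\<alpha> - 5 * \<beta>)" by (rule dvd_mult)
  have t2: "q\<^sup>2 dvd \<alpha>\<^sup>2 * (6 + 2 * \<alpha>)" by (intro dvd_mult2 dvd_power_same) fact
  have t3: "q\<^sup>2 dvd 8 * \<tau>\<^sup>2" by (intro dvd_mult dvd_power_same) fact
  have "q * q dvd \<tau> * (\<alpha> - \<beta>)"
    using \<open>q dvd \<alpha>\<close> \<open>q dvd \<beta>\<close> \<open>q dvd \<tau>\<close> by (simp add: mult_dvd_mono dvd_diff)
  then have t4: "q\<^sup>2 dvd 15 * (\<tau> * (\<alpha> - \<beta>))" unfolding power2_eq_square by (rule dvd_mult)
  have "q\<^sup>2 dvd 3 * (\<alpha> - 5 * \<beta>) - \<alpha>\<^sup>2 * (6 + 2 * \<alpha>) - 8 * \<tau>\<^sup>2 + 15 * (\<tau> * (\<alpha> - \<beta>))"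
    by (intro dvd_add dvd_diff t1 t2 t3 t4)
  also have "3 * (\<alpha> - 5 * \<beta>) - \<alpha>\<^sup>2 * (6 + 2 * \<alpha>) - 8 * \<tau>\<^sup>2 + 15 * (\<tau> * (\<alpha> - \<beta>))
      = 2 * (- (a ^ 3 + 3 * a) - 4 * w\<^sup>2 + 15 * w * F + 8 * w)"
  proof -
    have "a = 2 * F + e * b" using assms(7) by simp
    then show ?thesis by (simp add: \<alpha>_\<beta>_\<tau>_def power2_eq_square power3_eq_cube algebra_simps)
  qed
  finally have "q\<^sup>2 dvd 2 * (- (a ^ 3 + 3 * a) - 4 * w\<^sup>2 + 15 * w * F + 8 * w)" .
  moreover have "coprime (q\<^sup>2) 2" using assms(1) by simp
  ultimately show ?thesis by (metis coprime_dvd_mult_right_iff)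
qed

lemma lucas_fib_prime_cong_square:
  fixes p :: nat
  assumes "prime p" "5 < p"
  defines "w \<equiv> 2 ^ (p - 1) :: int"
    and "F \<equiv> int (fib (nat (int p - Legendre (int p) 5)))"
  shows "(int p)\<^sup>2 dvd - int (lucas (3 * p)) - 4 * w\<^sup>2 + 15 * w * F + 8 * w"
proof -
  define e where "e = Legendre (int p) 5"
  have "odd p" using assms prime_odd_nat by auto
  then have "odd (int p)" by simp
  have e: "e \<in> {1, -1}" using Legendre_five_reciprocity(2)[OF assms(1)] assms(2) by (simp add: e_def)
  then have "e\<^sup>2 = 1" by auto
  have "[e * int (fib p) = e * e] (mod int p)"
    using fib_prime_cong[OF assms(1)] assms(2) unfolding e_def by (intro cong_scalar_left) simp_all
  then have eb: "[e * int (fib p) = 1] (mod int p)"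
    using \<open>e\<^sup>2 = 1\<close> by (simp add: power2_eq_square)
  have w: "[w = 1] (mod int p)"
    using two_power_pred_prime_cong[OF assms(1)] assms(2) by (simp add: w_def flip: cong_int_iff)
  have a: "[int (lucas p) = 1] (mod int p)"
    using lucas_prime_cong[OF assms(1)] by (simp flip: cong_int_iff)
  have norm: "int (lucas p) ^ 2 - 5 * int (fib p) ^ 2 = -4"
    using lucas_sq_minus_fib_sq[of p] \<open>odd p\<close> by simp
  have "2 * F = int (lucas p) - e * int (fib p)"
    unfolding F_def e_def using two_fib_eq_lucas_minus_fib e assms(2) by (simp add: e_def)
  from norm_equation_cubic_dvd[OF \<open>odd (int p)\<close> a eb \<open>e\<^sup>2 = 1\<close> w norm this]
  show ?thesis using lucas_triple[of p] \<open>odd p\<close> by simp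
qed

section \<open>The sum modulo \<open>p\<close>\<close>

lemma sum_central_binomial_cong:
  assumes "prime p" "p = 2 * n + 1"
  shows "rat_cong_mod (\<Sum>k=1..n. of_nat (2 * k choose k) / (of_nat k * (-16) ^ k))
      (\<Sum>k=1..n. of_nat (n choose k) * (1 / 4) ^ k / of_nat k) (int p)"
proof (rule rat_cong_mod_sum)
  fix k assume "k \<in> {1..n}"
  then have k: "0 < k" "k < p" "k \<le> n" using assms(2) by auto
  have "int p dvd int (2 * k choose k) - (-4) ^ k * int (n choose k)"
    using central_binomial_cong[OF assms k(3)] by (simp add: cong_iff_dvd_diff)
  then obtain m where m: "int (2 * k choose k) - (-4) ^ k * int (n choose k) = int p * m" ..
  have "(-16 :: rat) ^ k = (-4) ^ k * 4 ^ k" by (simp flip: power_mult_distrib)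
  then have "of_nat (2 * k choose k) / (of_nat k * (-16) ^ k) - of_nat (n choose k) * (1 / 4) ^ k / of_nat k
      = (of_int (int (2 * k choose k) - (-4) ^ k * int (n choose k)) / of_int (int k * (-16) ^ k) :: rat)"
    using k(1) by (simp add: field_simps power_one_over)
  also have "\<dots> = of_int (int p * m) / of_int (int k * (-16) ^ k)" unfolding m ..
  finally show "rat_cong_mod (of_nat (2 * k choose k) / (of_nat k * (-16) ^ k))
      (of_nat (n choose k) * (1 / 4) ^ k / of_nat k) (int p)"
  proof (rule rat_cong_modI)
    have "coprime ((2::int) ^ 4) (int p)" by (simp only: coprime_power_left_iff) (simp add: assms(2))
    then have "coprime ((-16::int) ^ k) (int p)" by simp
    then show "coprime (int k * (-16) ^ k) (int p)"
      using coprime_of_less_prime[OF assms(1) k(1,2)] by simp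
  qed
qed

lemma coprime_denom_five_quarters_power: "odd m \<Longrightarrow> coprime_denom (int m) ((5 / 4) ^ j - 1)"
proof -
  assume "odd m"
  have "(5 / 4 :: rat) ^ j - 1 = of_int (5 ^ j - 2 ^ (2 * j)) / of_int (2 ^ (2 * j))"
    by (simp add: power_mult power_divide diff_divide_distrib)
  then show ?thesis
    by (simp only:) (rule coprime_denom_divide[OF coprime_denom_of_int], simp add: \<open>odd m\<close>)
qed

lemma sum_reciprocal_cong:
  assumes "prime p" "p = 2 * n + 1" "\<And>j. coprime_denom (int p) (c j)"
  shows "rat_cong_mod (\<Sum>j=1..n. c j / of_nat j)
      (\<Sum>j=1..n. - (2 / of_nat p) * of_nat (p choose (2 * j)) * c j) (int p)"
proof (rule rat_cong_mod_sum)
  fix j assume "j \<in> {1..n}"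
  then have j: "0 < 2 * j" "2 * j < p" using assms(2) by auto
  then have "odd (2 * j - 1)" by presburger
  have "coprime_denom (int p) (2 * c j)"
    using coprime_denom_mult[OF coprime_denom_of_int[of _ 2] assms(3)] by simp
  from rat_cong_mod_mult_left[OF this binomial_prime_over_prime_cong[OF assms(1) j]]
  show "rat_cong_mod (c j / of_nat j) (- (2 / of_nat p) * of_nat (p choose (2 * j)) * c j) (int p)"
    using \<open>odd (2 * j - 1)\<close> by (simp add: mult_ac)
qed

lemma sum_binomial_five_quarters_odd:
  assumes "p = 2 * n + 1"
  shows "(\<Sum>j=1..n. - (2 / of_nat p) * of_nat (p choose (2 * j)) * ((5 / 4) ^ j - 1))
      = - (2 / of_nat p) * (of_nat (lucas (3 * p)) / 2 ^ (p + 1) - 2 ^ (p - 1) :: rat)"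
proof -
  have "p div 2 = n" using assms by simp
  have "(\<Sum>j\<le>n. p choose (2 * j)) = 2 ^ (p - 1)"
    using sum_binomial_even[of p] assms by simp
  then have binomials: "(\<Sum>j\<le>n. of_nat (p choose (2 * j)) :: rat) = 2 ^ (p - 1)"
    by (metis of_nat_numeral of_nat_power of_nat_sum)
  have "{..n} = insert 0 {1..n}" by auto
  then have "(\<Sum>j=1..n. of_nat (p choose (2 * j)) * ((5 / 4) ^ j - 1))
      = (\<Sum>j\<le>n. of_nat (p choose (2 * j)) * ((5 / 4) ^ j - 1) :: rat)"
    by simp
  also have "\<dots> = (\<Sum>j\<le>n. of_nat (p choose (2 * j)) * (5 / 4) ^ j) - (\<Sum>j\<le>n. of_nat (p choose (2 * j)))"
    by (simp add: right_diff_distrib sum_subtractf)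
  also have "\<dots> = of_nat (lucas (3 * p)) / 2 ^ (p + 1) - 2 ^ (p - 1)"
    using sum_binomial_five_quarters[of p] unfolding \<open>p div 2 = n\<close> binomials by simp
  finally have sum: "(\<Sum>j=1..n. of_nat (p choose (2 * j)) * ((5 / 4) ^ j - 1))
      = of_nat (lucas (3 * p)) / 2 ^ (p + 1) - (2 ^ (p - 1) :: rat)" .
  have "(\<Sum>j=1..n. - (2 / of_nat p) * of_nat (p choose (2 * j)) * ((5 / 4) ^ j - 1))
      = - (2 / of_nat p) * (\<Sum>j=1..n. of_nat (p choose (2 * j)) * ((5 / 4) ^ j - 1) :: rat)"
    by (simp only: sum_distrib_left mult.assoc)
  then show ?thesis unfolding sum .
qed

lemma rat_cong_mod_of_square_dvd:
  fixes p :: nat and L F :: int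
  assumes "odd p"
    and "(int p)\<^sup>2 dvd - L - 4 * (2 ^ (p - 1))\<^sup>2 + 15 * 2 ^ (p - 1) * F + 8 * 2 ^ (p - 1)"
  shows "rat_cong_mod (- (2 / of_nat p) * (of_int L / 2 ^ (p + 1) - 2 ^ (p - 1)))
      (- (15 / 2) * of_int F / of_nat p + 4 * fermat_quot2 p) (int p)"
proof -
  obtain M where M: "- L - 4 * (2 ^ (p - 1))\<^sup>2 + 15 * 2 ^ (p - 1) * F + 8 * 2 ^ (p - 1) = (int p)\<^sup>2 * M"
    using assms(2) ..
  define W :: rat where "W = 2 ^ (p - 1)"
  define P :: rat where "P = of_nat p"
  have "0 < p" using assms(1) by (rule odd_pos)
  then have "W \<noteq> 0" "P \<noteq> 0" by (simp_all add: W_def P_def)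
  obtain k where k: "p = Suc k" using \<open>0 < p\<close> by (cases p) auto
  have pow: "(2::rat) ^ (p + 1) = 4 * W" "(2::rat) ^ p = 2 * W"
    unfolding W_def k by simp_all
  have numerator: "- of_int L - 4 * W\<^sup>2 + 15 * W * of_int F + 8 * W = P\<^sup>2 * of_int M"
    using arg_cong[OF M, of "of_int :: int \<Rightarrow> rat"] unfolding W_def P_def by simp
  have "- (2 / P) * (of_int L / (4 * W) - W) - (- (15 / 2) * of_int F / P + 4 * ((W - 1) / P))
      = (- of_int L - 4 * W\<^sup>2 + 15 * W * of_int F + 8 * W) / (2 * W * P)"
    using \<open>W \<noteq> 0\<close> \<open>P \<noteq> 0\<close> by (simp add: field_simps power2_eq_square)
  also have "\<dots> = of_int (int p * M) / of_int (2 ^ p)"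
    unfolding numerator using \<open>W \<noteq> 0\<close> \<open>P \<noteq> 0\<close> by (simp add: power2_eq_square P_def pow)
  finally have "- (2 / of_nat p) * (of_int L / 2 ^ (p + 1) - 2 ^ (p - 1))
      - (- (15 / 2) * of_int F / of_nat p + 4 * fermat_quot2 p) = of_int (int p * M) / of_int (2 ^ p)"
    unfolding fermat_quot2_def pow W_def[symmetric] P_def[symmetric] .
  then show ?thesis by (rule rat_cong_modI) (simp add: assms(1))
qed

theorem mainTheorem16:
  fixes p :: nat
  assumes "prime p" and "p > 5"
  shows "rat_cong_mod
    (\<Sum>k=1..(p - 1) div 2. of_nat ((2*k) choose k) / (of_nat k * (-16) ^ k))
    (- (15/2) * (of_nat (fib (nat (int p - Legendre (int p) 5)))) / of_nat p
       + 4 * fermat_quot2 p)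
    (int p)"
proof -
  have "odd p" using assms prime_odd_nat by auto
  then obtain n where n: "p = 2 * n + 1" by (blast elim: oddE)
  have "rat_cong_mod (\<Sum>k=1..n. of_nat (2 * k choose k) / (of_nat k * (-16) ^ k))
      (\<Sum>j=1..n. ((5 / 4) ^ j - 1) / of_nat j) (int p)"
    using sum_central_binomial_cong[OF assms(1) n] sum_binomial_over_index[of n "1 / 4 :: rat"]
    by simp
  also have "rat_cong_mod (\<Sum>j=1..n. ((5 / 4) ^ j - 1) / of_nat j)
      (- (2 / of_nat p) * (of_nat (lucas (3 * p)) / 2 ^ (p + 1) - 2 ^ (p - 1))) (int p)"
    using sum_reciprocal_cong[of p n "\<lambda>j. (5 / 4) ^ j - 1", OF assms(1) n
        coprime_denom_five_quarters_power[OF \<open>odd p\<close>]]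
      sum_binomial_five_quarters_odd[OF n]
    by simp
  also have "rat_cong_mod (- (2 / of_nat p) * (of_nat (lucas (3 * p)) / 2 ^ (p + 1) - 2 ^ (p - 1)))
      (- (15/2) * (of_nat (fib (nat (int p - Legendre (int p) 5)))) / of_nat p + 4 * fermat_quot2 p) (int p)"
    using rat_cong_mod_of_square_dvd[OF \<open>odd p\<close> lucas_fib_prime_cong_square[OF assms]] by simp
  finally show ?thesis using n by simp
qed

end
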